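(* For a finite set $\Gamma=\{\gamma_1,\dots,\gamma_n\}$ of tape symbols, the tape theory over $\Gamma$ is not finitely axiomatizable: there is no finite set of equations in the tape signature whose deductive closure under equational logic equals the tape theory.
   Context: For $i\in\mathbb Z$, $k\ge 0$ and $\sigma,\sigma':\mathbb Z\to\Gamma$ write $\sigma=_{i\pm k}\sigma'$ if $\sigma(j)=\sigma'(j)$ for all $j$ with $|i-j|\le k$, and $\sigma=^{i\pm k}\sigma'$ if $\sigma(j)=\sigma'(j)$ for all $j$ with $|i-j|>k$; write $\sigma_{+j}=\sigma\circ(\lambda i.\,i+j)$. The tape monad over $\Gamma$ assigns to a set $X$ the set $TX$ of maps $\langle r,z,t\rangle:\mathbb Z\times\Gamma^{\mathbb Z}\to X\times\mathbb Z\times\Gamma^{\mathbb Z}$ for which there is $k\ge0$ such that for all $i,j\in\mathbb Z$ and all $\sigma,\sigma'$ with $\sigma=_{i\pm k}\sigma'$: $t(i,\sigma)=_{i\pm k}t(i,\sigma')$, $r(i,\sigma)=r(i,\sigma')$, $|z(i,\sigma)-i|\le k$, $t(i,\sigma)=^{i\pm k}\sigma$, $z(i,\sigma)=z(i,\sigma')$, $t(i,\sigma_{+j})=t(i+j,\sigma)_{+j}$, $r(i,\sigma_{+j})=r(i+j,\sigma)$, $z(i,\sigma_{+j})=z(i+j,\sigma)-j$. The tape signature consists of an $n$-ary operation $read$, unary operations $write_i$ ($1\le i\le n$), and unary operations $lmove$, $rmove$, interpreted on each $TX$ by $read(p_1,\dots,p_n)(z,\sigma)=p_{\sigma(z)}(z,\sigma)$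 (where $p_{\gamma_i}$ means $p_i$), $write_i(p)(z,\sigma)=p(z,\sigma[z\mapsto\gamma_i])$, $lmove(p)(z,\sigma)=p(z-1,\sigma)$, $rmove(p)(z,\sigma)=p(z+1,\sigma)$, where $\sigma[z\mapsto\gamma]$ agrees with $\sigma$ except that it maps $z$ to $\gamma$. The tape theory over $\Gamma$ is the set of all equations $p=q$ between terms of the tape signature that are valid under this interpretation in $TX$ for every set $X$. *)

theory Defs
  imports Main
begin

text \<open>The tape symbols form a finite type 'g (Gamma).  The n-ary operation read
  takes one argument per tape symbol (indexed by 'g); write is indexed by the
  symbol written.  Variables have type 'v.\<close>

datatype ('g, 'v) tterm =
    Var 'v
  | Read "'g \<Rightarrow> ('g, 'v) tterm"
  | Write 'g "('g, 'v) tterm"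
  | LMove "('g, 'v) tterm"
  | RMove "('g, 'v) tterm"

primrec tsubst :: "('v \<Rightarrow> ('g, 'w) tterm) \<Rightarrow> ('g, 'v) tterm \<Rightarrow> ('g, 'w) tterm" where
  "tsubst s (Var v) = s v"
| "tsubst s (Read ps) = Read (\<lambda>g. tsubst s (ps g))"
| "tsubst s (Write g p) = Write g (tsubst s p)"
| "tsubst s (LMove p) = LMove (tsubst s p)"
| "tsubst s (RMove p) = RMove (tsubst s p)"

inductive eq_derivable :: "(('g, 'v) tterm \<times> ('g, 'v) tterm) set
    \<Rightarrow> ('g, 'v) tterm \<Rightarrow> ('g, 'v) tterm \<Rightarrow> bool"
  for E where
  ax: "(p, q) \<in> E \<Longrightarrow> eq_derivable E (tsubst s p) (tsubst s q)"
| refl: "eq_derivable E p p"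
| sym: "eq_derivable E p q \<Longrightarrow> eq_derivable E q p"
| trans: "eq_derivable E p q \<Longrightarrow> eq_derivable E q r \<Longrightarrow> eq_derivable E p r"
| cong_read: "(\<And>g. eq_derivable E (ps g) (qs g)) \<Longrightarrow> eq_derivable E (Read ps) (Read qs)"
| cong_write: "eq_derivable E p q \<Longrightarrow> eq_derivable E (Write g p) (Write g q)"
| cong_lmove: "eq_derivable E p q \<Longrightarrow> eq_derivable E (LMove p) (LMove q)"
| cong_rmove: "eq_derivable E p q \<Longrightarrow> eq_derivable E (RMove p) (RMove q)"

type_synonym ('g, 'x) tape_map = "int \<Rightarrow> (int \<Rightarrow> 'g) \<Rightarrow> 'x \<times> int \<times> (int \<Rightarrow> 'g)"

definition eq_near :: "int \<Rightarrow> nat \<Rightarrow> (int \<Rightarrow> 'g) \<Rightarrow> (int \<Rightarrow> 'g) \<Rightarrow> bool" where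
  "eq_near i k \<sigma> \<sigma>' \<longleftrightarrow> (\<forall>j. \<bar>i - j\<bar> \<le> int k \<longrightarrow> \<sigma> j = \<sigma>' j)"

definition eq_far :: "int \<Rightarrow> nat \<Rightarrow> (int \<Rightarrow> 'g) \<Rightarrow> (int \<Rightarrow> 'g) \<Rightarrow> bool" where
  "eq_far i k \<sigma> \<sigma>' \<longleftrightarrow> (\<forall>j. \<bar>i - j\<bar> > int k \<longrightarrow> \<sigma> j = \<sigma>' j)"

definition tshift :: "(int \<Rightarrow> 'g) \<Rightarrow> int \<Rightarrow> (int \<Rightarrow> 'g)" where
  "tshift \<sigma> j = \<sigma> \<circ> (\<lambda>i. i + j)"

definition in_T :: "'x set \<Rightarrow> ('g, 'x) tape_map \<Rightarrow> bool" where
  "in_T X f \<longleftrightarrow>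
     (\<forall>i \<sigma>. fst (f i \<sigma>) \<in> X) \<and>
     (\<exists>k::nat. \<forall>i j \<sigma> \<sigma>'. eq_near i k \<sigma> \<sigma>' \<longrightarrow>
        (let r = (\<lambda>i \<sigma>. fst (f i \<sigma>));
             z = (\<lambda>i \<sigma>. fst (snd (f i \<sigma>)));
             t = (\<lambda>i \<sigma>. snd (snd (f i \<sigma>)))
         in eq_near i k (t i \<sigma>) (t i \<sigma>') \<and>
            r i \<sigma> = r i \<sigma>' \<and>
            \<bar>z i \<sigma> - i\<bar> \<le> int k \<and>
            eq_far i k (t i \<sigma>) \<sigma> \<and>
            z i \<sigma> = z i \<sigma>' \<and>
            t i (tshift \<sigma> j) = tshift (t (i + j) \<sigma>) j \<and>
            r i (tshift \<sigma> j) = r (i + j) \<sigma> \<and>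
            z i (tshift \<sigma> j) = z (i + j) \<sigma> - j))"

primrec teval :: "('v \<Rightarrow> ('g, 'x) tape_map) \<Rightarrow> ('g, 'v) tterm \<Rightarrow> ('g, 'x) tape_map" where
  "teval \<rho> (Var v) = \<rho> v"
| "teval \<rho> (Read ps) = (\<lambda>z \<sigma>. teval \<rho> (ps (\<sigma> z)) z \<sigma>)"
| "teval \<rho> (Write g p) = (\<lambda>z \<sigma>. teval \<rho> p z (\<sigma>(z := g)))"
| "teval \<rho> (LMove p) = (\<lambda>z \<sigma>. teval \<rho> p (z - 1) \<sigma>)"
| "teval \<rho> (RMove p) = (\<lambda>z \<sigma>. teval \<rho> p (z + 1) \<sigma>)"

definition tape_valid_in :: "'x set \<Rightarrow> ('g, 'v) tterm \<Rightarrow> ('g, 'v) tterm \<Rightarrow> bool" where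
  "tape_valid_in X p q \<longleftrightarrow>
     (\<forall>\<rho>. (\<forall>v. in_T X (\<rho> v)) \<longrightarrow> teval \<rho> p = teval \<rho> q)"

text \<open>The tape theory: equations valid in T X for every set X.  Sets X range over
  subsets of nat (this yields the same theory as all sets).\<close>

definition tape_theory :: "(('g, 'v) tterm \<times> ('g, 'v) tterm) set" where
  "tape_theory = {(p, q). \<forall>X :: nat set. tape_valid_in X p q}"

end

theory Submission
  imports Defs
begin

text \<open>An equation of the tape theory holds iff both sides drive the head along the same
  path of moves and writes, whatever the initial tape.  The axioms of a finite system E
  move the head by at most some D cells, so all of them remain valid on a circular tape
  of circumference n = 2D + 1, where a window of radius D never meets itself; hence so
  does everything derivable from E.  But writing a and then b n cells to the right
  commutes on the integer tape and not on the circle, where both writes hit the same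
  cell.\<close>

primrec run :: "('g, 'v) tterm \<Rightarrow> int \<Rightarrow> (int \<Rightarrow> 'g) \<Rightarrow> 'v \<times> int \<times> (int \<Rightarrow> 'g)" where
  "run (Var v) z \<sigma> = (v, z, \<sigma>)"
| "run (Read ps) z \<sigma> = run (ps (\<sigma> z)) z \<sigma>"
| "run (Write g p) z \<sigma> = run p z (\<sigma>(z := g))"
| "run (LMove p) z \<sigma> = run p (z - 1) \<sigma>"
| "run (RMove p) z \<sigma> = run p (z + 1) \<sigma>"

text \<open>The circular tape of circumference m is stored in the cells 0, ..., m - 1; the head
  position is still an integer, and the head accesses the cell z mod m.\<close>

primrec run_circle ::
  "int \<Rightarrow> ('g, 'v) tterm \<Rightarrow> int \<Rightarrow> (int \<Rightarrow> 'g) \<Rightarrow> 'v \<times> int \<times> (int \<Rightarrow> 'g)" where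
  "run_circle m (Var v) z \<tau> = (v, z, \<tau>)"
| "run_circle m (Read ps) z \<tau> = run_circle m (ps (\<tau> (z mod m))) z \<tau>"
| "run_circle m (Write g p) z \<tau> = run_circle m p z (\<tau>(z mod m := g))"
| "run_circle m (LMove p) z \<tau> = run_circle m p (z - 1) \<tau>"
| "run_circle m (RMove p) z \<tau> = run_circle m p (z + 1) \<tau>"

primrec move_depth :: "('g::finite, 'v) tterm \<Rightarrow> nat" where
  "move_depth (Var v) = 0"
| "move_depth (Read ps) = Max (range (\<lambda>g. move_depth (ps g)))"
| "move_depth (Write g p) = move_depth p"
| "move_depth (LMove p) = Suc (move_depth p)"
| "move_depth (RMove p) = Suc (move_depth p)"

lemma move_depth_Read_ge: "move_depth (ps g) \<le> move_depth (Read ps)"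
  by (simp add: Max_ge)

lemma teval_eq_run: "teval \<rho> p z \<sigma> = (case run p z \<sigma> of (v, z', \<sigma>') \<Rightarrow> \<rho> v z' \<sigma>')"
  by (induction p arbitrary: z \<sigma>) auto

lemma teval_head_state: "teval (\<lambda>v z \<sigma>. (v, z, \<sigma>)) p = run p"
  by (induction p) (auto intro!: ext)

lemma in_T_head_state: "in_T UNIV (\<lambda>z \<sigma>. (v, z, \<sigma>))"
  unfolding in_T_def
  by (intro conjI exI[of _ 0]) (auto simp: eq_near_def eq_far_def)

text \<open>Interpreting every variable by the final head state needs T X to contain the variables
  themselves; this is where the variables being nat, like the sets X, matters.\<close>

lemma tape_theory_iff_run_eq:
  fixes p q :: "('g, nat) tterm"
  shows "(p, q) \<in> tape_theory \<longleftrightarrow> run p = run q"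
proof
  let ?\<rho> = "(\<lambda>v z \<sigma>. (v, z, \<sigma>)) :: nat \<Rightarrow> ('g, nat) tape_map"
  assume "(p, q) \<in> tape_theory"
  then have "tape_valid_in (UNIV :: nat set) p q" by (simp add: tape_theory_def)
  then have "(\<forall>v. in_T (UNIV :: nat set) (?\<rho> v)) \<longrightarrow> teval ?\<rho> p = teval ?\<rho> q"
    unfolding tape_valid_in_def by (rule spec)
  then have "teval ?\<rho> p = teval ?\<rho> q"
    using in_T_head_state by blast
  then show "run p = run q"
    by (simp add: teval_head_state)
next
  assume "run p = run q"
  then show "(p, q) \<in> tape_theory"
    by (auto intro!: ext simp: tape_theory_def tape_valid_in_def teval_eq_run)
qed

lemma tsubst_Var: "tsubst Var p = p"
  by (induction p) auto

lemma run_circle_tsubst: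
  "run_circle m (tsubst s p) z \<tau>
    = (case run_circle m p z \<tau> of (v, z', \<tau>') \<Rightarrow> run_circle m (s v) z' \<tau>')"
  by (induction p arbitrary: z \<tau>) auto

lemma eq_derivable_imp_run_circle_eq:
  assumes "eq_derivable E p q"
    and "\<And>p q. (p, q) \<in> E \<Longrightarrow> run_circle m p = run_circle m q"
  shows "run_circle m p = run_circle m q"
  using assms(1)
proof (induction rule: eq_derivable.induct)
  case (ax p q s)
  then show ?case
    using assms(2) by (intro ext) (simp add: run_circle_tsubst)
qed (auto intro!: ext)

lemma inj_on_mod_interval: "inj_on (\<lambda>j. j mod m) {a..<a + m}" for a m :: int
proof
  fix x y assume "x \<in> {a..<a + m}" "y \<in> {a..<a + m}" "x mod m = y mod m"
  then have "m dvd x - y" "\<bar>x - y\<bar> < m"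
    by (auto simp: mod_eq_dvd_iff)
  then show "x = y"
    using dvd_imp_le_int[of "x - y" m] by fastforce
qed

lemma mod_interval_hits: "0 \<le> k \<Longrightarrow> k < m \<Longrightarrow> \<exists>w\<in>{a..<a + m}. w mod m = k" for a k m :: int
  by (intro bexI[of _ "a + (k - a) mod m"]) (auto simp: mod_simps)

lemma run_circle_tape_outside:
  "0 < m \<Longrightarrow> k \<notin> {0..<m} \<Longrightarrow> snd (snd (run_circle m p z \<tau>)) k = \<tau> k"
  by (induction p arbitrary: z \<tau>) auto

text \<open>The agreement set W is kept fixed through the induction, larger than the window the
  head can reach; this way moves need no locality argument.\<close>

lemma run_circle_simulates_run:
  assumes "move_depth p \<le> d" and "{z - int d..z + int d} \<subseteq> W"
    and "inj_on (\<lambda>j. j mod m) W" and "\<forall>j\<in>W. \<sigma> j = \<tau> (j mod m)"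
  shows "fst (run_circle m p z \<tau>) = fst (run p z \<sigma>)
    \<and> fst (snd (run_circle m p z \<tau>)) = fst (snd (run p z \<sigma>))
    \<and> (\<forall>j\<in>W. snd (snd (run_circle m p z \<tau>)) (j mod m) = snd (snd (run p z \<sigma>)) j)"
  using assms(1,2,4)
proof (induction p arbitrary: d z \<sigma> \<tau>)
  case (Read ps)
  have "z \<in> W" using Read.prems(2) by auto
  then have "\<tau> (z mod m) = \<sigma> z" using Read.prems(3) by simp
  moreover have "move_depth (ps (\<sigma> z)) \<le> d"
    using Read.prems(1) move_depth_Read_ge[of ps "\<sigma> z"] by linarith
  ultimately show ?case
    using Read.IH[OF rangeI, of "\<sigma> z" d z \<sigma> \<tau>] Read.prems(2,3) by simp
next
  case (Write g p)
  have "z \<in> W" using Write.prems(2) by auto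
  then have "\<forall>j\<in>W. (\<sigma>(z := g)) j = (\<tau>(z mod m := g)) (j mod m)"
    using Write.prems(3) assms(3) by (auto simp: inj_on_def)
  then show ?case
    using Write.IH[of d z "\<sigma>(z := g)" "\<tau>(z mod m := g)"] Write.prems(1,2)
    unfolding run.simps run_circle.simps move_depth.simps by blast
next
  case (LMove p)
  then obtain d' where "d = Suc d'" "move_depth p \<le> d'" by (cases d) auto
  moreover have "{z - 1 - int d'..z - 1 + int d'} \<subseteq> W" using LMove.prems(2) calculation by auto
  ultimately show ?case using LMove.IH LMove.prems(3) by simp
next
  case (RMove p)
  then obtain d' where "d = Suc d'" "move_depth p \<le> d'" by (cases d) auto
  moreover have "{z + 1 - int d'..z + 1 + int d'} \<subseteq> W" using RMove.prems(2) calculation by auto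
  ultimately show ?case using RMove.IH RMove.prems(3) by simp
qed simp

lemma run_circle_eq_if_run_eq:
  fixes p q :: "('g::finite, 'v) tterm"
  assumes "run p = run q" and "move_depth p \<le> d" and "move_depth q \<le> d" and "2 * int d < m"
  shows "run_circle m p = run_circle m q"
proof (intro ext)
  fix z :: int and \<tau> :: "int \<Rightarrow> 'g"
  define W where "W = {z - int d..<z - int d + m}"
  have window: "{z - int d..z + int d} \<subseteq> W" and inj: "inj_on (\<lambda>j. j mod m) W"
    using assms(4) inj_on_mod_interval by (auto simp: W_def)
  have agree: "\<forall>j\<in>W. \<tau> (j mod m) = \<tau> (j mod m)" by simp
  note sim_p = run_circle_simulates_run[where \<sigma> = "\<lambda>j. \<tau> (j mod m)" and \<tau> = \<tau>,
      OF assms(2) window inj agree]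
    and sim_q = run_circle_simulates_run[where \<sigma> = "\<lambda>j. \<tau> (j mod m)" and \<tau> = \<tau>,
      OF assms(3) window inj agree]
  have "snd (snd (run_circle m p z \<tau>)) k = snd (snd (run_circle m q z \<tau>)) k" for k
  proof (cases "k \<in> {0..<m}")
    case True
    then obtain w where "w \<in> W" and "k = w mod m"
      using mod_interval_hits[of k m "z - int d"] unfolding W_def by auto
    then show ?thesis using sim_p sim_q assms(1) by simp
  next
    case False
    moreover have "0 < m" using assms(4) by linarith
    ultimately show ?thesis by (simp add: run_circle_tape_outside)
  qed
  then show "run_circle m p z \<tau> = run_circle m q z \<tau>"
    using sim_p sim_q assms(1) by (simp add: prod_eq_iff fun_eq_iff)
qed

definition write_then_far_write :: "'g \<Rightarrow> 'g \<Rightarrow> nat \<Rightarrow> 'v \<Rightarrow> ('g, 'v) tterm" where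
  "write_then_far_write a b n v = Write a ((RMove ^^ n) (Write b ((LMove ^^ n) (Var v))))"

definition far_write_then_write :: "'g \<Rightarrow> 'g \<Rightarrow> nat \<Rightarrow> 'v \<Rightarrow> ('g, 'v) tterm" where
  "far_write_then_write a b n v = (RMove ^^ n) (Write b ((LMove ^^ n) (Write a (Var v))))"

lemma run_RMove_power: "run ((RMove ^^ n) p) z \<sigma> = run p (z + int n) \<sigma>"
  by (induction n arbitrary: z) (auto simp: add.assoc)

lemma run_LMove_power: "run ((LMove ^^ n) p) z \<sigma> = run p (z - int n) \<sigma>"
  by (induction n arbitrary: z) (auto simp: algebra_simps)

lemma run_circle_RMove_power: "run_circle m ((RMove ^^ n) p) z \<tau> = run_circle m p (z + int n) \<tau>"
  by (induction n arbitrary: z) (auto simp: add.assoc)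

lemma run_circle_LMove_power: "run_circle m ((LMove ^^ n) p) z \<tau> = run_circle m p (z - int n) \<tau>"
  by (induction n arbitrary: z) (auto simp: algebra_simps)

lemma run_far_writes_commute:
  "0 < n \<Longrightarrow> run (write_then_far_write a b n v) = run (far_write_then_write a b n v)"
  by (intro ext) (simp add: write_then_far_write_def far_write_then_write_def
      run_RMove_power run_LMove_power fun_upd_twist)

lemma run_circle_far_writes_differ:
  assumes "a \<noteq> b"
  shows "run_circle (int n) (write_then_far_write a b n v)
    \<noteq> run_circle (int n) (far_write_then_write a b n v)"
proof
  assume "run_circle (int n) (write_then_far_write a b n v)
    = run_circle (int n) (far_write_then_write a b n v)"
  then have "snd (snd (run_circle (int n) (write_then_far_write a b n v) 0 (\<lambda>_. a))) 0
      = snd (snd (run_circle (int n) (far_write_then_write a b n v) 0 (\<lambda>_. a))) 0"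
    by simp
  then show False
    using assms by (simp add: write_then_far_write_def far_write_then_write_def
        run_circle_RMove_power run_circle_LMove_power)
qed

theorem mainTheorem2:
  assumes "card (UNIV :: 'g::finite set) \<ge> 2"
  shows "\<not> (\<exists>E :: (('g, nat) tterm \<times> ('g, nat) tterm) set.
             finite E \<and> {(p, q). eq_derivable E p q} = tape_theory)"
proof
  assume "\<exists>E :: (('g, nat) tterm \<times> ('g, nat) tterm) set.
             finite E \<and> {(p, q). eq_derivable E p q} = tape_theory"
  then obtain E :: "(('g, nat) tterm \<times> ('g, nat) tterm) set"
    where "finite E" and E: "{(p, q). eq_derivable E p q} = tape_theory" by blast
  obtain a b :: 'g where "a \<noteq> b"
    using assms by (metis card_le_Suc0_iff_eq finite_UNIV not_less_eq_eq numeral_2_eq_2)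
  obtain D where D: "\<And>p q. (p, q) \<in> E \<Longrightarrow> move_depth p \<le> D \<and> move_depth q \<le> D"
    using \<open>finite E\<close> finite_nat_set_iff_bounded_le[of "(\<lambda>(p, q). max (move_depth p) (move_depth q)) ` E"]
    by fastforce
  define n where "n = 2 * D + 1"
  have E_run: "run p = run q" if "(p, q) \<in> E" for p q
  proof -
    have "eq_derivable E p q" using eq_derivable.ax[OF that, of Var] by (simp add: tsubst_Var)
    then have "(p, q) \<in> tape_theory" using E by blast
    then show ?thesis by (simp add: tape_theory_iff_run_eq)
  qed
  have "run_circle (int n) p = run_circle (int n) q" if "(p, q) \<in> E" for p q
    using E_run[OF that] D[OF that] by (intro run_circle_eq_if_run_eq[of p q D]) (auto simp: n_def)
  moreover have "eq_derivable E (write_then_far_write a b n 0) (far_write_then_write a b n 0)"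
    using E run_far_writes_commute[of n a b 0] by (auto simp: n_def tape_theory_iff_run_eq)
  ultimately show False
    using eq_derivable_imp_run_circle_eq run_circle_far_writes_differ[OF \<open>a \<noteq> b\<close>] by metis
qed

end
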